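(* Let $W,V$ be subspaces of $\mathbb{C}^n$ with $\mathbb{C}^n=W\oplus V^\perp$, let $\{\mathbf{w}_i\}_{i=1}^N$ be a frame for $W$ with frame operator $\mathbf{S}=\sum_{i=1}^N\mathbf{w}_i\mathbf{w}_i^*$, and let $\{\mathbf{v}_i\}_{i=1}^N$ be an oblique dual frame of $\{\mathbf{w}_i\}_{i=1}^N$ on $V$. Then $$\sum_{i=1}^N\sum_{j=1}^N|\langle\mathbf{w}_i,\mathbf{v}_j\rangle|^2\ge d_W,$$ where $d_W=\dim W$, and equality holds if and only if $\mathbf{v}_j=\boldsymbol{\pi}_{VW^\perp}\mathbf{S}^\dagger\mathbf{w}_j$ for every $j=1,\dots,N$.
   Context: The inner product on $\mathbb{C}^n$ is $\langle\mathbf{x},\mathbf{y}\rangle=\mathbf{y}^*\mathbf{x}$. $\mathbf{S}^\dagger$ is the Moore–Penrose inverse. When $\mathbb{C}^n=W\oplus V^\perp$ (equivalently $\mathbb{C}^n=V\oplus W^\perp$), $\boldsymbol{\pi}_{WV^\perp}$ is the oblique projection onto $W$ along $V^\perp$ and $\boldsymbol{\pi}_{VW^\perp}$ is the oblique projection onto $V$ along $W^\perp$. A finite family $\{\mathbf{w}_i\}_{i=1}^N\subset W$ is a frame for $W$ if it spans $W$. A frame $\{\mathbf{v}_i\}_{i=1}^N\subset V$ for $V$ is an oblique dual frame of $\{\mathbf{w}_i\}$ on $V$ if $\boldsymbol{\pi}_{WV^\perp}\mathbf{f}=\sum_{i=1}^N\langle\mathbf{f},\mathbf{v}_i\rangle\mathbf{w}_i$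 for all $\mathbf{f}\in\mathbb{C}^n$. *)

theory Defs
  imports "HOL-Analysis.Analysis"
begin

text \<open>Vectors of C^n are modelled as \<open>complex ^ 'n\<close> ('n a finite index type with n elements).
Complex-linear notions (subspace, span, dim) come from the interpretation \<open>vec\<close> of
\<open>vector_space (*s)\<close> in Cartesian_Space.\<close>

definition cinner :: "complex ^ 'n \<Rightarrow> complex ^ 'n \<Rightarrow> complex" where
  "cinner x y = (\<Sum>i\<in>UNIV. x $ i * cnj (y $ i))"

definition corth :: "(complex ^ 'n) set \<Rightarrow> (complex ^ 'n) set" where
  "corth V = {x. \<forall>v\<in>V. cinner x v = 0}"

definition direct_sum_univ :: "(complex ^ 'n) set \<Rightarrow> (complex ^ 'n) set \<Rightarrow> bool" where
  "direct_sum_univ A B \<longleftrightarrow> A \<inter> B = {0} \<and> (\<forall>f. \<exists>a\<in>A. \<exists>b\<in>B. f = a + b)"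

text \<open>Oblique projection onto A along B (meaningful when C^n = A (+) B).\<close>
definition oblique_proj :: "(complex ^ 'n) set \<Rightarrow> (complex ^ 'n) set \<Rightarrow> complex ^ 'n \<Rightarrow> complex ^ 'n" where
  "oblique_proj A B f = (THE a. a \<in> A \<and> f - a \<in> B)"

definition cadjoint :: "complex ^ 'n ^ 'm \<Rightarrow> complex ^ 'm ^ 'n" where
  "cadjoint A = (\<chi> i j. cnj (A $ j $ i))"

definition outer :: "complex ^ 'n \<Rightarrow> complex ^ 'n \<Rightarrow> complex ^ 'n ^ 'n" where
  "outer x y = (\<chi> i j. x $ i * cnj (y $ j))"

definition moore_penrose :: "complex ^ 'n ^ 'm \<Rightarrow> complex ^ 'm ^ 'n" where
  "moore_penrose A = (THE X. A ** X ** A = A \<and> X ** A ** X = X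
      \<and> cadjoint (A ** X) = A ** X \<and> cadjoint (X ** A) = X ** A)"

definition is_frame :: "(nat \<Rightarrow> complex ^ 'n) \<Rightarrow> nat \<Rightarrow> (complex ^ 'n) set \<Rightarrow> bool" where
  "is_frame w N W \<longleftrightarrow> (\<forall>i\<in>{1..N}. w i \<in> W) \<and> vec.span (w ` {1..N}) = W"

definition frame_operator :: "(nat \<Rightarrow> complex ^ 'n) \<Rightarrow> nat \<Rightarrow> complex ^ 'n ^ 'n" where
  "frame_operator w N = (\<Sum>i\<in>{1..N}. outer (w i) (w i))"

definition oblique_dual_frame ::
  "(nat \<Rightarrow> complex ^ 'n) \<Rightarrow> (nat \<Rightarrow> complex ^ 'n) \<Rightarrow> nat \<Rightarrow> (complex ^ 'n) set \<Rightarrow> (complex ^ 'n) set \<Rightarrow> bool" where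
  "oblique_dual_frame v w N W V \<longleftrightarrow> is_frame v N V \<and>
     (\<forall>f. oblique_proj W (corth V) f = (\<Sum>i\<in>{1..N}. cinner f (v i) *s w i))"

end

theory Submission
  imports Defs
begin

text \<open>
  Let v0_j = pi_{VW^perp} S^+ w_j be the canonical oblique dual and u_j = v_j - v0_j.
  Since S v0_j = w_j, expanding the squares column by column gives
    sum_ij |<w_i,v_j>|^2 = sum_j <w_j,v0_j> + sum_ij |<w_i,u_j>|^2 + 2 Re sum_j <w_j,u_j>.
  Both sum_j <w_j,v_j> and sum_j <w_j,v0_j> equal dim W, being the traces of the projections
  pi_{WV^perp} and S^+ S onto W. So the cross term vanishes, and the excess sum_ij |<w_i,u_j>|^2
  is zero iff every u_j is orthogonal to W, i.e. iff u_j lies in V \<inter> W^perp = {0}.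
\<close>

lemma cinner_add_left: "cinner (x + y) z = cinner x z + cinner y z"
  by (simp add: cinner_def distrib_right sum.distrib)

lemma cinner_add_right: "cinner x (y + z) = cinner x y + cinner x z"
  by (simp add: cinner_def distrib_left sum.distrib)

lemma cinner_diff_left: "cinner (x - y) z = cinner x z - cinner y z"
  by (simp add: cinner_def left_diff_distrib sum_subtractf)

lemma cinner_diff_right: "cinner x (y - z) = cinner x y - cinner x z"
  by (simp add: cinner_def right_diff_distrib sum_subtractf)

lemma cinner_scale_left: "cinner (c *s x) y = c * cinner x y"
  by (simp add: cinner_def sum_distrib_left mult.assoc)

lemma cinner_scale_right: "cinner x (c *s y) = cnj c * cinner x y"
  by (simp add: cinner_def sum_distrib_left ac_simps)

lemma cinner_zero_left [simp]: "cinner 0 y = 0"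
  by (simp add: cinner_def)

lemma cinner_zero_right [simp]: "cinner x 0 = 0"
  by (simp add: cinner_def)

lemma cinner_sum_left: "cinner (sum f A) y = (\<Sum>a\<in>A. cinner (f a) y)"
  by (simp add: cinner_def sum_distrib_right sum.swap[of _ A])

lemma cinner_sum_right: "cinner x (sum f A) = (\<Sum>a\<in>A. cinner x (f a))"
  by (simp add: cinner_def sum_distrib_left sum.swap[of _ A])

lemma cinner_commute: "cinner y x = cnj (cinner x y)"
  by (simp add: cinner_def mult.commute)

lemma cinner_self: "cinner x x = of_real (\<Sum>i\<in>UNIV. (cmod (x $ i))\<^sup>2)"
  by (simp only: cinner_def of_real_sum complex_norm_square)

lemma cinner_self_eq_0 [simp]: "cinner x x = 0 \<longleftrightarrow> x = 0"
proof
  assume "cinner x x = 0"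
  then have "(\<Sum>i\<in>UNIV. (cmod (x $ i))\<^sup>2) = 0"
    by (simp only: cinner_self of_real_eq_0_iff)
  then have "\<forall>i\<in>UNIV. (cmod (x $ i))\<^sup>2 = 0"
    by (subst sum_nonneg_eq_0_iff[symmetric]) auto
  then show "x = 0" by (simp add: vec_eq_iff)
qed simp

lemma sum_matrix_vector_mult: "sum F S *v x = (\<Sum>a\<in>S. F a *v x)"
  by (induct S rule: infinite_finite_induct) (simp_all add: matrix_vector_mult_add_rdistrib)

lemma outer_matrix_vector_mult: "outer x y *v f = cinner f y *s x"
  unfolding vec_eq_iff outer_def matrix_vector_mult_def cinner_def vector_scalar_mult_def
  by (simp add: sum_distrib_left mult_ac)

lemma matrix_mult_outer: "A ** outer x y = outer (A *v x) y"
  unfolding vec_eq_iff outer_def matrix_matrix_mult_def matrix_vector_mult_def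
  by (simp add: sum_distrib_right mult.assoc)

lemma matrix_mult_sum_right: "A ** sum F S = (\<Sum>a\<in>S. A ** F a :: complex ^ 'n ^ 'n)"
proof -
  have "A ** 0 = (0 :: complex ^ 'n ^ 'n)" by (simp add: matrix_matrix_mult_def vec_eq_iff)
  then show ?thesis
    by (induct S rule: infinite_finite_induct) (simp_all add: matrix_add_ldistrib)
qed

lemma trace_outer: "trace (outer x y) = cinner x y"
  by (simp add: trace_def outer_def cinner_def)

lemma trace_sum: "trace (sum F S) = (\<Sum>a\<in>S. trace (F a :: complex ^ 'n ^ 'n))"
  by (induct S rule: infinite_finite_induct) (simp_all add: trace_def sum.distrib)

lemma cadjoint_mult: "cadjoint (A ** B) = cadjoint B ** cadjoint (A :: complex ^ 'n ^ 'm)"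
  unfolding vec_eq_iff cadjoint_def matrix_matrix_mult_def by (simp add: mult.commute)

lemma moore_penrose_unique:
  fixes A :: "complex ^ 'n ^ 'm"
  assumes "A ** X ** A = A" "X ** A ** X = X" "cadjoint (A ** X) = A ** X" "cadjoint (X ** A) = X ** A"
    and "A ** Y ** A = A" "Y ** A ** Y = Y" "cadjoint (A ** Y) = A ** Y" "cadjoint (Y ** A) = Y ** A"
  shows "X = Y"
proof -
  have "X = X ** (A ** X)" using assms(2) by (simp only: matrix_mul_assoc)
  also have "\<dots> = X ** cadjoint (A ** X)" using assms(3) by (simp only:)
  also have "\<dots> = X ** cadjoint X ** cadjoint (A ** Y ** A)"
    by (simp only: cadjoint_mult assms(5) matrix_mul_assoc)
  also have "\<dots> = X ** (cadjoint (A ** X) ** cadjoint (A ** Y))"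
    by (simp only: cadjoint_mult matrix_mul_assoc)
  also have "\<dots> = (X ** A ** X) ** A ** Y" using assms(3,7) by (simp only: matrix_mul_assoc)
  also have "\<dots> = X ** A ** Y" using assms(2) by (simp only:)
  finally have XAY: "X = X ** A ** Y" .
  have "Y = (Y ** A) ** Y" using assms(6) by (simp only:)
  also have "\<dots> = cadjoint (Y ** A) ** Y" using assms(8) by (simp only:)
  also have "\<dots> = cadjoint (A ** X ** A) ** cadjoint Y ** Y"
    by (simp only: cadjoint_mult assms(1))
  also have "\<dots> = (cadjoint (X ** A) ** cadjoint (Y ** A)) ** Y"
    by (simp only: cadjoint_mult matrix_mul_assoc)
  also have "\<dots> = X ** A ** (Y ** A ** Y)" using assms(4,8) by (simp only: matrix_mul_assoc)
  also have "\<dots> = X ** A ** Y" using assms(6) by (simp only:)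
  finally show ?thesis using XAY by simp
qed

lemma moore_penrose_eqI:
  fixes A :: "complex ^ 'n ^ 'm"
  assumes "A ** X ** A = A" "X ** A ** X = X" "cadjoint (A ** X) = A ** X" "cadjoint (X ** A) = X ** A"
  shows "moore_penrose A = X"
  unfolding moore_penrose_def
  by (rule the_equality) (use assms moore_penrose_unique in blast)+

lemma subspace_corth: "vec.subspace (corth A)"
  by (simp add: vec.subspace_def corth_def cinner_add_left cinner_scale_left)

lemma corth_span [simp]: "corth (vec.span A) = corth A"
proof
  show "corth (vec.span A) \<subseteq> corth A"
    using vec.span_superset unfolding corth_def by blast
  show "corth A \<subseteq> corth (vec.span A)"
  proof
    fix u assume u: "u \<in> corth A"
    have "vec.subspace {x. cinner u x = 0}"
      by (simp add: vec.subspace_def cinner_add_right cinner_scale_right)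
    then have "vec.span A \<subseteq> {x. cinner u x = 0}"
      using u by (intro vec.span_minimal) (auto simp: corth_def)
    then show "u \<in> corth (vec.span A)" by (auto simp: corth_def)
  qed
qed

lemma corth_self_eq_0: "x \<in> A \<Longrightarrow> x \<in> corth A \<Longrightarrow> x = 0"
  unfolding corth_def by (metis (mono_tags) cinner_self_eq_0 mem_Collect_eq)

definition orthonormal :: "(complex ^ 'n) set \<Rightarrow> bool" where
  "orthonormal B \<longleftrightarrow>
     (\<forall>b\<in>B. cinner b b = 1) \<and> (\<forall>b\<in>B. \<forall>c\<in>B. b \<noteq> c \<longrightarrow> cinner b c = 0)"

definition orthogonal_projector :: "(complex ^ 'n) set \<Rightarrow> complex ^ 'n ^ 'n" where
  "orthogonal_projector B = (\<Sum>b\<in>B. outer b b)"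

lemma orthogonal_projector_mv: "orthogonal_projector B *v f = (\<Sum>b\<in>B. cinner f b *s b)"
  by (simp add: orthogonal_projector_def sum_matrix_vector_mult outer_matrix_vector_mult)

lemma cinner_orthonormal_sum:
  assumes "orthonormal B" "finite B" "b \<in> B"
  shows "cinner (\<Sum>u\<in>B. c u *s u) b = c b"
proof -
  have "cinner (\<Sum>u\<in>B. c u *s u) b = (\<Sum>u\<in>B. c u * cinner u b)"
    by (simp add: cinner_sum_left cinner_scale_left)
  also have "\<dots> = (\<Sum>u\<in>B. if u = b then c u else 0)"
    using assms(1,3) unfolding orthonormal_def by (intro sum.cong) auto
  also have "\<dots> = c b" using assms(2,3) by simp
  finally show ?thesis .
qed

lemma orthonormal_independent:
  assumes "orthonormal B" "finite B"
  shows "vec.independent B"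
  unfolding vec.independent_explicit
proof (intro conjI allI impI ballI)
  fix c v assume "(\<Sum>v\<in>B. c v *s v) = 0" "v \<in> B"
  then show "c v = 0" using cinner_orthonormal_sum[OF assms, of v c] by simp
qed (rule assms(2))

lemma dim_span_orthonormal: "orthonormal B \<Longrightarrow> finite B \<Longrightarrow> vec.dim (vec.span B) = card B"
  by (rule vec.dim_span_eq_card_independent[OF orthonormal_independent])

lemma orthogonal_projector_in_span: "orthogonal_projector B *v f \<in> vec.span B"
  unfolding orthogonal_projector_mv by (intro vec.span_sum vec.span_scale vec.span_base)

lemma orthogonal_projector_residual:
  assumes "orthonormal B" "finite B"
  shows "f - orthogonal_projector B *v f \<in> corth B"
  unfolding corth_def orthogonal_projector_mv
  by (simp add: cinner_diff_left cinner_orthonormal_sum[OF assms])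

lemma orthogonal_projector_fixes_span:
  assumes "orthonormal B" "finite B" "x \<in> vec.span B"
  shows "orthogonal_projector B *v x = x"
proof -
  have "x - orthogonal_projector B *v x \<in> vec.span B"
    using assms(3) orthogonal_projector_in_span by (rule vec.span_diff)
  moreover have "x - orthogonal_projector B *v x \<in> corth (vec.span B)"
    using orthogonal_projector_residual[OF assms(1,2)] by simp
  ultimately show ?thesis using corth_self_eq_0 by force
qed

lemma cadjoint_orthogonal_projector: "cadjoint (orthogonal_projector B) = orthogonal_projector B"
  unfolding vec_eq_iff cadjoint_def orthogonal_projector_def outer_def
  by (simp add: mult.commute)

lemma trace_orthogonal_projector: "orthonormal B \<Longrightarrow> trace (orthogonal_projector B) = of_nat (card B)"
  by (simp add: orthogonal_projector_def trace_sum trace_outer orthonormal_def)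

lemma orthonormal_insert:
  assumes "orthonormal B" "cinner e e = 1" "e \<in> corth B"
  shows "orthonormal (insert e B)"
proof -
  have "cinner b e = 0" if "b \<in> B" for b
    using assms(3) that cinner_commute[of b e] by (simp add: corth_def)
  then show ?thesis using assms unfolding orthonormal_def corth_def by auto
qed

lemma unit_multiple_exists:
  assumes "y \<noteq> 0"
  obtains r where "r \<noteq> 0" "cinner (r *s y) (r *s y) = 1"
proof -
  define t where "t = (\<Sum>i\<in>UNIV. (cmod (y $ i))\<^sup>2)"
  have yy: "cinner y y = of_real t" unfolding t_def by (rule cinner_self)
  have "t \<ge> 0" unfolding t_def by (simp add: sum_nonneg)
  moreover have "t \<noteq> 0" using assms yy by (metis cinner_self_eq_0 of_real_0)
  ultimately have "t > 0" by simp
  define r where "r = complex_of_real (1 / sqrt t)"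
  have "cinner (r *s y) (r *s y) = r * cnj r * of_real t"
    by (simp add: cinner_scale_left cinner_scale_right yy)
  also have "\<dots> = 1" using \<open>t > 0\<close> by (simp add: r_def field_simps flip: of_real_mult)
  finally have "cinner (r *s y) (r *s y) = 1" .
  moreover have "r \<noteq> 0" using \<open>t > 0\<close> by (simp add: r_def)
  ultimately show ?thesis using that by simp
qed

lemma orthonormal_extend:
  assumes "orthonormal B" "finite B"
  obtains B' where "orthonormal B'" "finite B'" "vec.span B' = vec.span (insert x B)"
proof (cases "x \<in> vec.span B")
  case True
  then show ?thesis using that assms by (simp add: vec.span_redundant)
next
  case False
  define p where "p = orthogonal_projector B *v x"
  have p: "p \<in> vec.span B" unfolding p_def by (rule orthogonal_projector_in_span)
  then have "x - p \<noteq> 0" using False by auto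
  then obtain r where r: "r \<noteq> 0" "cinner (r *s (x - p)) (r *s (x - p)) = 1"
    by (rule unit_multiple_exists)
  define e where "e = r *s (x - p)"
  have "e \<in> corth B"
    unfolding e_def p_def
    by (intro vec.subspace_scale[OF subspace_corth] orthogonal_projector_residual[OF assms])
  then have "orthonormal (insert e B)" using assms(1) r(2) by (simp add: orthonormal_insert e_def)
  moreover have "e \<in> vec.span (insert x B)"
  proof -
    have "e - r *s x = - (r *s p)" by (simp add: e_def)
    then show ?thesis
      unfolding vec.span_breakdown_eq using p by (metis vec.span_neg vec.span_scale)
  qed
  moreover have "x \<in> vec.span (insert e B)"
  proof -
    have "x - (1 / r) *s e = p" using r(1) by (simp add: e_def)
    then show ?thesis unfolding vec.span_breakdown_eq using p by metis
  qed
  ultimately have "vec.span (insert e B) = vec.span (insert x B)"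
    unfolding vec.span_eq using vec.span_superset by blast
  then show ?thesis using that assms(2) \<open>orthonormal (insert e B)\<close> by blast
qed

lemma orthonormal_basis_of_span:
  assumes "finite A"
  obtains B where "orthonormal B" "finite B" "vec.span B = vec.span A"
  using assms
proof (induct A arbitrary: thesis rule: finite_induct)
  case empty
  show ?case by (rule empty.prems[of "{}"]) (simp_all add: orthonormal_def)
next
  case (insert x A)
  obtain B where B: "orthonormal B" "finite B" "vec.span B = vec.span A" by (rule insert.hyps(3))
  obtain B' where B': "orthonormal B'" "finite B'" "vec.span B' = vec.span (insert x B)"
    using orthonormal_extend[OF B(1,2)] .
  have "vec.span (insert x B) = vec.span (insert x A)"
    by (simp only: vec.span_insert B(3))
  with B' show ?case by (intro insert.prems[of B']) simp_all
qed

lemma orthonormal_basis_exists: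
  assumes "vec.subspace W"
  obtains B where "orthonormal B" "finite B" "vec.span B = W"
proof -
  obtain A where A: "A \<subseteq> W" "vec.independent A" "W \<subseteq> vec.span A"
    by (rule vec.basis_exists[of W])
  have "vec.span A = W" using vec.span_minimal[OF A(1) assms] A(3) by (rule antisym)
  obtain B where "orthonormal B" "finite B" "vec.span B = vec.span A"
    using orthonormal_basis_of_span[OF vec.finiteI_independent[OF A(2)]] .
  with \<open>vec.span A = W\<close> show ?thesis by (intro that[of B]) simp_all
qed

lemma trace_projection_eq_dim:
  fixes A :: "complex ^ 'n ^ 'n"
  assumes "vec.subspace W" and range: "\<And>f. A *v f \<in> W" and fixed: "\<And>x. x \<in> W \<Longrightarrow> A *v x = x"
  shows "trace A = of_nat (vec.dim W)"
proof -
  obtain B where B: "orthonormal B" "finite B" "vec.span B = W"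
    using orthonormal_basis_exists[OF assms(1)] .
  define P where "P = orthogonal_projector B"
  have PA: "P ** A = A"
    unfolding matrix_eq using orthogonal_projector_fixes_span[OF B(1,2)] range B(3)
    by (simp add: P_def flip: matrix_vector_mul_assoc)
  have AP: "A ** P = P"
    unfolding matrix_eq using orthogonal_projector_in_span[of B] fixed B(3)
    by (simp add: P_def flip: matrix_vector_mul_assoc)
  have "trace A = trace (A ** P)" using trace_mul_sym[of P A] by (simp only: PA)
  also have "\<dots> = trace P" by (simp only: AP)
  also have "\<dots> = of_nat (card B)" unfolding P_def by (rule trace_orthogonal_projector[OF B(1)])
  also have "card B = vec.dim W" using dim_span_orthonormal[OF B(1,2)] B(3) by simp
  finally show ?thesis .
qed

lemma frame_operator_mv: "frame_operator w N *v f = (\<Sum>i\<in>{1..N}. cinner f (w i) *s w i)"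
  by (simp add: frame_operator_def sum_matrix_vector_mult outer_matrix_vector_mult)

lemma cinner_frame_operator:
  "cinner (frame_operator w N *v a) b = (\<Sum>i\<in>{1..N}. cnj (cinner (w i) a) * cinner (w i) b)"
  by (simp add: frame_operator_mv cinner_sum_left cinner_scale_left cinner_commute[of a "w i" for i])

lemma frame_energy:
  "complex_of_real (\<Sum>i\<in>{1..N}. (cmod (cinner (w i) a))\<^sup>2) = cinner (frame_operator w N *v a) a"
  unfolding cinner_frame_operator of_real_sum complex_norm_square by (simp add: mult.commute)

lemma frame_energy_add:
  "(\<Sum>i\<in>{1..N}. (cmod (cinner (w i) (a + b)))\<^sup>2)
     = (\<Sum>i\<in>{1..N}. (cmod (cinner (w i) a))\<^sup>2) + (\<Sum>i\<in>{1..N}. (cmod (cinner (w i) b))\<^sup>2)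
       + 2 * Re (cinner (frame_operator w N *v a) b)"
proof -
  have "(cmod (x + y))\<^sup>2 = (cmod x)\<^sup>2 + (cmod y)\<^sup>2 + 2 * Re (cnj x * y)" for x y
    unfolding cmod_power2 by (simp add: power2_eq_square algebra_simps)
  then show ?thesis
    by (simp add: cinner_add_right cinner_frame_operator sum.distrib sum_distrib_left)
qed

lemma frame_subspace: "is_frame w N W \<Longrightarrow> vec.subspace W"
  by (auto simp: is_frame_def)

lemma frame_energy_eq_0_iff:
  assumes "is_frame w N W"
  shows "(\<Sum>i\<in>{1..N}. (cmod (cinner (w i) a))\<^sup>2) = 0 \<longleftrightarrow> a \<in> corth W"
proof -
  have W: "W = vec.span (w ` {1..N})" using assms by (simp add: is_frame_def)
  have "(\<Sum>i\<in>{1..N}. (cmod (cinner (w i) a))\<^sup>2) = 0 \<longleftrightarrow> (\<forall>i\<in>{1..N}. cinner a (w i) = 0)"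
    by (simp add: sum_nonneg_eq_0_iff cinner_commute[of a])
  also have "\<dots> \<longleftrightarrow> a \<in> corth W" unfolding W corth_span by (auto simp: corth_def)
  finally show ?thesis .
qed

lemma frame_operator_mem:
  "is_frame w N W \<Longrightarrow> frame_operator w N *v f \<in> W"
  unfolding is_frame_def frame_operator_mv
  by (blast intro: vec.span_sum vec.span_scale vec.span_base)

lemma frame_operator_corth:
  "is_frame w N W \<Longrightarrow> f \<in> corth W \<Longrightarrow> frame_operator w N *v f = 0"
  unfolding is_frame_def frame_operator_mv corth_def by simp

lemma frame_operator_inj_on:
  assumes "is_frame w N W"
  shows "inj_on ((*v) (frame_operator w N)) W"
  unfolding vec.inj_on_iff_eq_0[OF frame_subspace[OF assms]]
proof (intro ballI impI)
  fix x assume "x \<in> W" and Sx: "frame_operator w N *v x = 0"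
  have "complex_of_real (\<Sum>i\<in>{1..N}. (cmod (cinner (w i) x))\<^sup>2) = cinner (frame_operator w N *v x) x"
    by (rule frame_energy)
  then have "x \<in> corth W"
    unfolding Sx cinner_zero_left of_real_eq_0_iff frame_energy_eq_0_iff[OF assms] .
  then show "x = 0" using \<open>x \<in> W\<close> corth_self_eq_0 by blast
qed

lemma frame_operator_image:
  assumes "is_frame w N W"
  shows "(*v) (frame_operator w N) ` W = W"
proof (rule vec.subspace_dim_equal)
  have "vec.span W = W" using frame_subspace[OF assms] by simp
  then have "vec.dim ((*v) (frame_operator w N) ` W) = vec.dim W"
    using frame_operator_inj_on[OF assms] by (metis vec.dim_image_eq[OF matrix_vector_mul_linear_gen])
  then show "vec.dim W \<le> vec.dim ((*v) (frame_operator w N) ` W)" by simp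
qed (use frame_subspace[OF assms] frame_operator_mem[OF assms] vec.subspace_image in auto)

lemma frame_operator_mult_orthogonal_projector:
  assumes frame: "is_frame w N W" and B: "orthonormal B" "finite B" "vec.span B = W"
  shows "frame_operator w N ** orthogonal_projector B = frame_operator w N"
  unfolding matrix_eq
proof
  fix f
  have "f - orthogonal_projector B *v f \<in> corth W"
    using orthogonal_projector_residual[OF B(1,2)] B(3) corth_span[of B] by simp
  then have "frame_operator w N *v (f - orthogonal_projector B *v f) = 0"
    by (rule frame_operator_corth[OF frame])
  then show "(frame_operator w N ** orthogonal_projector B) *v f = frame_operator w N *v f"
    by (simp add: matrix_vector_mult_diff_distrib flip: matrix_vector_mul_assoc)
qed

lemma frame_operator_right_inverse:
  assumes frame: "is_frame w N W" and B: "orthonormal B" "finite B" "vec.span B = W"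
  obtains X where "frame_operator w N ** X = orthogonal_projector B" "\<And>f. X *v f \<in> W"
proof -
  let ?S = "frame_operator w N"
  define g where "g = inv_into W ((*v) ?S)"
  have g: "g b \<in> W" "?S *v g b = b" if "b \<in> B" for b
  proof -
    have "b \<in> (*v) ?S ` W"
      using frame_operator_image[OF frame] B(3) vec.span_base[OF that] by simp
    then show "g b \<in> W" "?S *v g b = b" unfolding g_def by (simp_all add: inv_into_into f_inv_into_f)
  qed
  define X where "X = (\<Sum>b\<in>B. outer (g b) b)"
  have X_mv: "X *v f = (\<Sum>b\<in>B. cinner f b *s g b)" for f
    by (simp add: X_def sum_matrix_vector_mult outer_matrix_vector_mult)
  have "?S ** X = orthogonal_projector B"
    unfolding matrix_eq
    by (simp add: X_mv orthogonal_projector_mv g vec.linear_sum[OF matrix_vector_mul_linear_gen]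
        vector_scalar_commute flip: matrix_vector_mul_assoc)
  moreover have "X *v f \<in> W" for f
    unfolding X_mv using frame_subspace[OF frame] g(1)
    by (intro vec.subspace_sum vec.subspace_scale) auto
  ultimately show ?thesis by (rule that)
qed

lemma frame_operator_left_inverse:
  assumes frame: "is_frame w N W" and B: "orthonormal B" "finite B" "vec.span B = W"
    and SX: "frame_operator w N ** X = orthogonal_projector B" and X_mem: "\<And>f. X *v f \<in> W"
  shows "X ** frame_operator w N = orthogonal_projector B"
  unfolding matrix_eq
proof
  fix f
  let ?S = "frame_operator w N" and ?P = "orthogonal_projector B"
  have "X *v (?S *v f) - ?P *v f \<in> W"
    using X_mem orthogonal_projector_in_span[of B f] B(3) frame_subspace[OF frame]
    by (simp add: vec.subspace_diff)
  moreover have "?S *v (X *v (?S *v f)) = ?S *v (?P *v f)"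
  proof -
    have "?S *v (X *v (?S *v f)) = ?P *v (?S *v f)"
      by (subst matrix_vector_mul_assoc) (simp only: SX)
    also have "\<dots> = ?S *v f"
      using orthogonal_projector_fixes_span[OF B(1,2)] frame_operator_mem[OF frame] B(3) by simp
    also have "\<dots> = ?S *v (?P *v f)"
      by (simp add: matrix_vector_mul_assoc frame_operator_mult_orthogonal_projector[OF frame B])
    finally show ?thesis .
  qed
  then have "?S *v (X *v (?S *v f) - ?P *v f) = 0" by (simp add: matrix_vector_mult_diff_distrib)
  ultimately have "X *v (?S *v f) - ?P *v f = 0"
    using frame_operator_inj_on[OF frame] unfolding vec.inj_on_iff_eq_0[OF frame_subspace[OF frame]] by blast
  then show "(X ** ?S) *v f = ?P *v f" by (simp flip: matrix_vector_mul_assoc)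
qed

lemma moore_penrose_frame_operator:
  assumes frame: "is_frame w N W" and B: "orthonormal B" "finite B" "vec.span B = W"
  shows "frame_operator w N ** moore_penrose (frame_operator w N) = orthogonal_projector B"
    and "moore_penrose (frame_operator w N) ** frame_operator w N = orthogonal_projector B"
proof -
  let ?S = "frame_operator w N" and ?P = "orthogonal_projector B"
  obtain X where SX: "?S ** X = ?P" and X_mem: "\<And>f. X *v f \<in> W"
    using frame_operator_right_inverse[OF frame B] by blast
  have XS: "X ** ?S = ?P" using frame_operator_left_inverse[OF frame B SX X_mem] .
  have P_fixes: "x \<in> W \<Longrightarrow> ?P *v x = x" for x
    using orthogonal_projector_fixes_span[OF B(1,2)] B(3) by simp
  have "moore_penrose ?S = X"
  proof (rule moore_penrose_eqI)
    show "?S ** X ** ?S = ?S"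
      unfolding SX matrix_eq using P_fixes frame_operator_mem[OF frame] by (simp flip: matrix_vector_mul_assoc)
    show "X ** ?S ** X = X"
      unfolding XS matrix_eq using P_fixes X_mem by (simp flip: matrix_vector_mul_assoc)
  qed (simp_all add: SX XS cadjoint_orthogonal_projector)
  with SX XS show "?S ** moore_penrose ?S = ?P" and "moore_penrose ?S ** ?S = ?P" by simp_all
qed

lemma oblique_proj_eqI:
  assumes "vec.subspace A" "vec.subspace B" "A \<inter> B \<subseteq> {0}" "a \<in> A" "f - a \<in> B"
  shows "oblique_proj A B f = a"
  unfolding oblique_proj_def
proof (rule the_equality)
  fix a' assume a': "a' \<in> A \<and> f - a' \<in> B"
  have "a' - a \<in> A" using a' assms(1,4) by (simp add: vec.subspace_diff)
  moreover have "a' - a = (f - a) - (f - a')" by simp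
  then have "a' - a \<in> B" using a' assms(2,5) by (metis vec.subspace_diff)
  ultimately show "a' = a" using assms(3) by auto
qed (use assms in simp)

lemma direct_sum_corth_inter:
  assumes "direct_sum_univ W (corth V)"
  shows "V \<inter> corth W \<subseteq> {0}"
proof
  fix a assume a: "a \<in> V \<inter> corth W"
  obtain p q where pq: "p \<in> W" "q \<in> corth V" "a = p + q"
    using assms unfolding direct_sum_univ_def by blast
  have "cinner a p = 0" using a pq(1) by (simp add: corth_def)
  moreover have "cinner a q = 0"
    using pq(2) a cinner_commute[of a q] by (simp add: corth_def)
  ultimately have "cinner a a = 0" using pq(3) by (simp add: cinner_add_right)
  then show "a \<in> {0}" by simp
qed

definition canonical_dual ::
  "(nat \<Rightarrow> complex ^ 'n) \<Rightarrow> nat \<Rightarrow> (complex ^ 'n) set \<Rightarrow> (complex ^ 'n) set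
     \<Rightarrow> nat \<Rightarrow> complex ^ 'n" where
  "canonical_dual w N W V j = oblique_proj V (corth W) (moore_penrose (frame_operator w N) *v w j)"

locale oblique_dual_pair =
  fixes W V :: "(complex ^ 'n) set" and w v :: "nat \<Rightarrow> complex ^ 'n" and N :: nat
  assumes subspace_V: "vec.subspace V"
    and direct_sum: "direct_sum_univ W (corth V)"
    and frame: "is_frame w N W"
    and dual: "oblique_dual_frame v w N W V"
begin

lemma subspace_W: "vec.subspace W"
  using frame by (rule frame_subspace)

lemma frame_mem: "i \<in> {1..N} \<Longrightarrow> w i \<in> W"
  using frame by (simp add: is_frame_def)

lemma dual_mem: "i \<in> {1..N} \<Longrightarrow> v i \<in> V"
  using dual by (simp add: oblique_dual_frame_def is_frame_def)

lemma dual_synthesis_mem: "(\<Sum>i\<in>{1..N}. cinner f (v i) *s w i) \<in> W"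
  using subspace_W frame_mem by (intro vec.subspace_sum vec.subspace_scale) auto

lemma dual_synthesis_fixes_W:
  assumes "x \<in> W"
  shows "(\<Sum>i\<in>{1..N}. cinner x (v i) *s w i) = x"
proof -
  have "W \<inter> corth V \<subseteq> {0}" using direct_sum by (simp add: direct_sum_univ_def)
  then have "oblique_proj W (corth V) x = x"
    using subspace_W subspace_corth assms by (intro oblique_proj_eqI) (simp_all add: corth_def)
  then show ?thesis using dual by (simp add: oblique_dual_frame_def)
qed

lemma sum_cinner_dual_eq_dim: "(\<Sum>j\<in>{1..N}. cinner (w j) (v j)) = of_nat (vec.dim W)"
proof -
  define A where "A = (\<Sum>j\<in>{1..N}. outer (w j) (v j))"
  have A_mv: "A *v f = (\<Sum>j\<in>{1..N}. cinner f (v j) *s w j)" for f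
    by (simp add: A_def sum_matrix_vector_mult outer_matrix_vector_mult)
  have "trace A = of_nat (vec.dim W)"
    using subspace_W dual_synthesis_mem dual_synthesis_fixes_W
    by (intro trace_projection_eq_dim) (simp_all add: A_mv)
  then show ?thesis by (simp add: A_def trace_sum trace_outer)
qed

lemma adjoint_synthesis_mem: "(\<Sum>i\<in>{1..N}. cinner f (w i) *s v i) \<in> V"
  using subspace_V dual_mem by (intro vec.subspace_sum vec.subspace_scale) auto

lemma adjoint_synthesis_residual: "f - (\<Sum>i\<in>{1..N}. cinner f (w i) *s v i) \<in> corth W"
  unfolding corth_def
proof (intro CollectI ballI)
  fix x assume "x \<in> W"
  have "cinner (\<Sum>i\<in>{1..N}. cinner f (w i) *s v i) x = cinner f (\<Sum>i\<in>{1..N}. cinner x (v i) *s w i)"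
    by (simp add: cinner_sum_left cinner_sum_right cinner_scale_left cinner_scale_right
        cinner_commute[of x "v i" for i] mult.commute)
  then show "cinner (f - (\<Sum>i\<in>{1..N}. cinner f (w i) *s v i)) x = 0"
    using dual_synthesis_fixes_W[OF \<open>x \<in> W\<close>] by (simp add: cinner_diff_left)
qed

lemma oblique_proj_V: "oblique_proj V (corth W) f = (\<Sum>i\<in>{1..N}. cinner f (w i) *s v i)"
  using subspace_V subspace_corth direct_sum_corth_inter[OF direct_sum]
    adjoint_synthesis_mem adjoint_synthesis_residual
  by (rule oblique_proj_eqI)

lemma oblique_proj_V_mem: "oblique_proj V (corth W) f \<in> V"
  unfolding oblique_proj_V by (rule adjoint_synthesis_mem)

lemma oblique_proj_V_residual: "f - oblique_proj V (corth W) f \<in> corth W"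
  unfolding oblique_proj_V by (rule adjoint_synthesis_residual)

lemma canonical_dual_mem: "canonical_dual w N W V j \<in> V"
  unfolding canonical_dual_def by (rule oblique_proj_V_mem)

lemma frame_operator_canonical_dual:
  assumes "j \<in> {1..N}"
  shows "frame_operator w N *v canonical_dual w N W V j = w j"
proof -
  obtain B where B: "orthonormal B" "finite B" "vec.span B = W"
    using orthonormal_basis_exists[OF subspace_W] .
  let ?S = "frame_operator w N" and ?y = "moore_penrose (frame_operator w N) *v w j"
  have "?S *v (?y - canonical_dual w N W V j) = 0"
    unfolding canonical_dual_def by (rule frame_operator_corth[OF frame oblique_proj_V_residual])
  then have "?S *v canonical_dual w N W V j = ?S *v ?y"
    by (simp add: matrix_vector_mult_diff_distrib)
  also have "\<dots> = orthogonal_projector B *v w j"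
    by (simp add: matrix_vector_mul_assoc moore_penrose_frame_operator(1)[OF frame B])
  also have "\<dots> = w j"
    using orthogonal_projector_fixes_span[OF B(1,2)] B(3) frame_mem[OF assms] by simp
  finally show ?thesis .
qed

lemma sum_cinner_canonical_dual_eq_dim:
  "(\<Sum>j\<in>{1..N}. cinner (w j) (canonical_dual w N W V j)) = of_nat (vec.dim W)"
proof -
  obtain B where B: "orthonormal B" "finite B" "vec.span B = W"
    using orthonormal_basis_exists[OF subspace_W] .
  let ?S = "frame_operator w N" and ?X = "moore_penrose (frame_operator w N)"
  have "cinner (canonical_dual w N W V j) (w j) = cinner (?X *v w j) (w j)" if "j \<in> {1..N}" for j
    using oblique_proj_V_residual[of "?X *v w j"] frame_mem[OF that]
    by (simp add: canonical_dual_def corth_def cinner_diff_left)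
  then have "(\<Sum>j\<in>{1..N}. cinner (canonical_dual w N W V j) (w j)) = trace (?X ** ?S)"
    by (simp add: frame_operator_def matrix_mult_sum_right matrix_mult_outer trace_sum trace_outer)
  also have "\<dots> = of_nat (card B)"
    by (simp add: moore_penrose_frame_operator(2)[OF frame B] trace_orthogonal_projector[OF B(1)])
  also have "card B = vec.dim W" using dim_span_orthonormal[OF B(1,2)] B(3) by simp
  finally have "cnj (\<Sum>j\<in>{1..N}. cinner (canonical_dual w N W V j) (w j)) = of_nat (vec.dim W)"
    by simp
  then show ?thesis by (simp add: cinner_commute[of "w j" "canonical_dual w N W V j" for j])
qed

lemma cross_gram_decomposition:
  "(\<Sum>i\<in>{1..N}. \<Sum>j\<in>{1..N}. (cmod (cinner (w i) (v j)))\<^sup>2)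
     = real (vec.dim W)
       + (\<Sum>i\<in>{1..N}. \<Sum>j\<in>{1..N}. (cmod (cinner (w i) (v j - canonical_dual w N W V j)))\<^sup>2)"
proof -
  let ?v0 = "canonical_dual w N W V" and ?S = "frame_operator w N"
  let ?E = "\<lambda>a. \<Sum>i\<in>{1..N}. (cmod (cinner (w i) a))\<^sup>2"
  have energy_Re: "?E a = Re (cinner (?S *v a) a)" for a
    using arg_cong[OF frame_energy[where a = a], of Re] by simp
  have column: "?E (v j) = Re (cinner (w j) (?v0 j)) + ?E (v j - ?v0 j) + 2 * Re (cinner (w j) (v j - ?v0 j))"
    if "j \<in> {1..N}" for j
  proof -
    have "?E (v j) = ?E (?v0 j + (v j - ?v0 j))" by simp
    also have "\<dots> = ?E (?v0 j) + ?E (v j - ?v0 j) + 2 * Re (cinner (?S *v ?v0 j) (v j - ?v0 j))"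
      by (rule frame_energy_add)
    finally show ?thesis by (simp only: energy_Re frame_operator_canonical_dual[OF that])
  qed
  have "(\<Sum>j\<in>{1..N}. cinner (w j) (v j - ?v0 j)) = 0"
    unfolding cinner_diff_right sum_subtractf sum_cinner_dual_eq_dim sum_cinner_canonical_dual_eq_dim
    by simp
  then have cross: "(\<Sum>j\<in>{1..N}. Re (cinner (w j) (v j - ?v0 j))) = 0"
    by (simp flip: Re_sum)
  have diagonal: "(\<Sum>j\<in>{1..N}. Re (cinner (w j) (?v0 j))) = real (vec.dim W)"
    using arg_cong[OF sum_cinner_canonical_dual_eq_dim, of Re] by simp
  have "(\<Sum>j\<in>{1..N}. ?E (v j))
      = (\<Sum>j\<in>{1..N}. Re (cinner (w j) (?v0 j)) + ?E (v j - ?v0 j) + 2 * Re (cinner (w j) (v j - ?v0 j)))"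
    using column by (rule sum.cong[OF refl])
  also have "\<dots> = real (vec.dim W) + (\<Sum>j\<in>{1..N}. ?E (v j - ?v0 j))"
    using cross diagonal by (simp add: sum.distrib flip: sum_distrib_left)
  finally have "(\<Sum>j\<in>{1..N}. ?E (v j)) = real (vec.dim W) + (\<Sum>j\<in>{1..N}. ?E (v j - ?v0 j))" .
  then show ?thesis
    by (simp only:
        sum.swap[where A = "{1..N}" and B = "{1..N}" and g = "\<lambda>i j. (cmod (cinner (w i) (v j)))\<^sup>2"]
        sum.swap[where A = "{1..N}" and B = "{1..N}"
          and g = "\<lambda>i j. (cmod (cinner (w i) (v j - ?v0 j)))\<^sup>2"])
qed

lemma cross_gram_excess_eq_0_iff:
  "(\<Sum>i\<in>{1..N}. \<Sum>j\<in>{1..N}. (cmod (cinner (w i) (v j - canonical_dual w N W V j)))\<^sup>2) = 0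
     \<longleftrightarrow> (\<forall>j\<in>{1..N}. v j = canonical_dual w N W V j)"
proof -
  let ?u = "\<lambda>j. v j - canonical_dual w N W V j"
  have corth_iff: "?u j \<in> corth W \<longleftrightarrow> v j = canonical_dual w N W V j" if "j \<in> {1..N}" for j
  proof
    assume "?u j \<in> corth W"
    moreover have "?u j \<in> V"
      using subspace_V dual_mem[OF that] canonical_dual_mem by (rule vec.subspace_diff)
    ultimately show "v j = canonical_dual w N W V j"
      using direct_sum_corth_inter[OF direct_sum] by auto
  qed (simp add: corth_def)
  have "(\<Sum>i\<in>{1..N}. \<Sum>j\<in>{1..N}. (cmod (cinner (w i) (?u j)))\<^sup>2)
      = (\<Sum>j\<in>{1..N}. \<Sum>i\<in>{1..N}. (cmod (cinner (w i) (?u j)))\<^sup>2)"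
    by (rule sum.swap)
  also have "\<dots> = 0 \<longleftrightarrow> (\<forall>j\<in>{1..N}. (\<Sum>i\<in>{1..N}. (cmod (cinner (w i) (?u j)))\<^sup>2) = 0)"
    by (simp add: sum_nonneg sum_nonneg_eq_0_iff)
  finally show ?thesis using frame_energy_eq_0_iff[OF frame] corth_iff by simp
qed

end

theorem proposition3p3:
  fixes W V :: "(complex ^ 'n) set" and w v :: "nat \<Rightarrow> complex ^ 'n" and N :: nat
  assumes "vec.subspace W" and "vec.subspace V"
    and "direct_sum_univ W (corth V)"
    and "is_frame w N W"
    and "oblique_dual_frame v w N W V"
  shows "(\<Sum>i\<in>{1..N}. \<Sum>j\<in>{1..N}. (cmod (cinner (w i) (v j)))\<^sup>2) \<ge> real (vec.dim W)
    \<and> ((\<Sum>i\<in>{1..N}. \<Sum>j\<in>{1..N}. (cmod (cinner (w i) (v j)))\<^sup>2) = real (vec.dim W)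
        \<longleftrightarrow> (\<forall>j\<in>{1..N}. v j = oblique_proj V (corth W)
                 (moore_penrose (frame_operator w N) *v w j)))"
proof -
  interpret oblique_dual_pair W V w v N
    using assms(2-5) by unfold_locales
  have "(\<Sum>i\<in>{1..N}. \<Sum>j\<in>{1..N}. (cmod (cinner (w i) (v j - canonical_dual w N W V j)))\<^sup>2) \<ge> 0"
    by (intro sum_nonneg) simp
  then show ?thesis
    using cross_gram_decomposition cross_gram_excess_eq_0_iff by (auto simp: canonical_dual_def)
qed

end
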